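(* In the two-tier residency matching game described in the context with list length $K=1$ and $v\ge e/(e-1)$, under the large market approximation, the social welfare of the (symmetric) Nash equilibrium is at least a $\frac{e}{2(e-1)}$ fraction (note $\frac{e}{2(e-1)}>0.79$) of the social welfare of SIMPLE.
   Context: Model: there are $n$ high-tier and $rn$ low-tier doctors ($r>0$), and $n$ high-tier and $rn$ low-tier hospitals, each with one position. Every hospital prefers every high doctor to every low doctor and every doctor prefers every high hospital to every low hospital; within a tier, preferences are independent uniformly random permutations. Each doctor submits a ranked list of exactly $K$ hospitals (his top choices within the tiers he chooses); hospitals submit full true rankings; doctor-proposing deferred acceptance is run. Values: a doctor gets $v>1$ if matched to a high hospital, $1$ if matched to a low one, $0$ if unmatched; a hospital gets $v$ if matched to a high doctor, $1$ if matched to a low doctor, $0$ if unfilled. Social welfare is the sum of the values of all doctors and hospitals. Large market approximation: $n\to\infty$ with $r,K,v$ fixed, and each application to a hospital is accepted independently with a probability determined by the aggregate strategy profile through fixed-point equations (expected matched doctors = expected hospitals receiving at least one admissible application; a hospital receiving on average $\lambda$ applications gets none with probability $e^{-\lambda}$; low doctors' applications to hospitals already taken by high doctors are rejected). Equilibrium: symmetric Nash equilibrium, all doctors of a tier using the same (possibly mixed) strategy, each maximizing expected value given the acceptance probabilities. SIMPLE: the outcome when every doctor submits a single application ($K=1$) to his most preferred hospital in his own tier; its welfare in the large market limit is $2(v+r)n(1-1/e)$. *)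

theory Defs
  imports Complex_Main
begin

(* Large-market model with list length K = 1.
   A (mixed) symmetric strategy profile is (p, q):
     p = probability a high doctor applies to his top high hospital (else his top low hospital),
     q = probability a low doctor applies to his top high hospital (else his top low hospital).
   There are n high and r*n low hospitals; all counts below are per n (large-market limit). *)

(* acceptance probability of an application to a hospital tier receiving on average
   lambda applications per hospital (all admissible): (1 - e^-x)/lambda,
   with the limiting value 1 when lambda = 0 *)
definition acc :: "real \<Rightarrow> real" where
  "acc x = (if x = 0 then 1 else (1 - exp (- x)) / x)"

(* acceptance probabilities: doctor tier / hospital tier *)
definition acc_HH :: "real \<Rightarrow> real \<Rightarrow> real \<Rightarrow> real" where
  "acc_HH r p q = acc p"
definition acc_HL :: "real \<Rightarrow> real \<Rightarrow> real \<Rightarrow> real" where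
  "acc_HL r p q = acc ((1 - p) / r)"
definition acc_LH :: "real \<Rightarrow> real \<Rightarrow> real \<Rightarrow> real" where
  "acc_LH r p q = exp (- p) * acc (q * r)"
definition acc_LL :: "real \<Rightarrow> real \<Rightarrow> real \<Rightarrow> real" where
  "acc_LL r p q = exp (- ((1 - p) / r)) * acc (1 - q)"

definition symNE :: "real \<Rightarrow> real \<Rightarrow> real \<Rightarrow> real \<Rightarrow> bool" where
  "symNE r v p q \<longleftrightarrow>
     0 \<le> p \<and> p \<le> 1 \<and> 0 \<le> q \<and> q \<le> 1 \<and>
     (p > 0 \<longrightarrow> v * acc_HH r p q \<ge> acc_HL r p q) \<and>
     (p < 1 \<longrightarrow> acc_HL r p q \<ge> v * acc_HH r p q) \<and>
     (q > 0 \<longrightarrow> v * acc_LH r p q \<ge> acc_LL r p q) \<and>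
     (q < 1 \<longrightarrow> acc_LL r p q \<ge> v * acc_LH r p q)"

(* social welfare divided by n in the large-market limit:
   high-high matches (value 2v), high doctor-low hospital (v+1),
   low doctor-high hospital (1+v), low-low (2) *)
definition welfare :: "real \<Rightarrow> real \<Rightarrow> real \<Rightarrow> real \<Rightarrow> real" where
  "welfare r v p q =
      2 * v * (1 - exp (- p))
    + (v + 1) * r * (1 - exp (- ((1 - p) / r)))
    + (1 + v) * exp (- p) * (1 - exp (- (q * r)))
    + 2 * r * exp (- ((1 - p) / r)) * (1 - exp (- (1 - q)))"

(* SIMPLE: every doctor applies once to his top hospital in his own tier *)
definition welfare_simple :: "real \<Rightarrow> real \<Rightarrow> real" where
  "welfare_simple r v = welfare r v 1 0"

lemma welfare_simple_formula:
  assumes "r > 0" shows "welfare_simple r v = 2 * (v + r) * (1 - exp (-1))"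
  using assms by (simp add: welfare_simple_def welfare_def algebra_simps)

end

theory Submission
  imports Defs
begin

text \<open>
  The acceptance probability \<open>acc\<close> is strictly decreasing, equal to \<open>1 - 1/e\<close> at \<open>1\<close> and at
  most \<open>1\<close>. Hence, once \<open>v (1 - 1/e) \<ge> 1\<close>, a high doctor strictly prefers applying high whenever
  \<open>p < 1\<close>, so every equilibrium has \<open>p = 1\<close>. The high doctors and hospitals then contribute
  \<open>2v(1 - 1/e) \<ge> v\<close>. For the low tier put \<open>a = acc (1 - q)\<close>: the low doctors' indifference
  condition makes the low-doctor/high-hospital matches worth at least \<open>q r a\<close>, the low-low matches
  are worth \<open>2 r (1 - q) a\<close>, and \<open>a (2 - q) \<ge> 1\<close>. Altogether the welfare is at least \<open>v + r\<close>,
  while SIMPLE yields \<open>2 (v + r) (1 - 1/e)\<close>.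
\<close>

lemma exp_gt_one_plus:
  fixes t :: real
  assumes "t \<noteq> 0"
  shows "1 + t < exp t"
proof (cases "t \<le> -2")
  case True
  then show ?thesis
    using exp_gt_zero[of t] by linarith
next
  case False
  have "(1 + t/2)^2 \<le> (exp (t/2))^2"
    using False by (intro power_mono) simp_all
  also have "(exp (t/2))^2 = exp t"
    by (simp add: power2_eq_square flip: exp_add)
  finally have "(1 + t/2)^2 \<le> exp t" .
  moreover have "0 < t * t"
    using assms by (cases "t > 0") (auto simp: mult_neg_neg)
  then have "1 + t < (1 + t/2)^2"
    by (simp add: power2_eq_square algebra_simps)
  ultimately show ?thesis by simp
qed

text \<open>Strict convexity of \<open>exp (-p)\<close> on \<open>[0, 1]\<close>, via \<open>exp (-p) = (1 - p) exp (-p) (1 + p) + p exp (-p) p\<close>.\<close>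

lemma exp_neg_less_chord:
  fixes p :: real
  assumes "0 < p" "p < 1"
  shows "exp (-p) < (1 - p) + p * exp (-1)"
proof -
  have "exp (-p) * (1 + p) < exp (-p) * exp p"
    using exp_gt_one_plus[of p] assms by simp
  then have left: "exp (-p) * (1 + p) < 1"
    by (simp flip: exp_add)
  have "exp (-p) * p < exp (-p) * exp (p - 1)"
    using exp_gt_one_plus[of "p - 1"] assms by simp
  then have right: "exp (-p) * p < exp (-1)"
    by (simp flip: exp_add)
  have "exp (-p) = (1 - p) * (exp (-p) * (1 + p)) + p * (exp (-p) * p)"
    by (simp add: algebra_simps)
  also have "\<dots> < (1 - p) * 1 + p * exp (-1)"
    using left right assms by (intro add_strict_mono mult_strict_left_mono) auto
  finally show ?thesis by simp
qed

lemma exp_neg_one_le_half: "exp (-1 :: real) \<le> 1/2"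
proof -
  have "2 \<le> exp (1 :: real)"
    using exp_ge_add_one_self[of 1] by simp
  then show ?thesis
    by (simp add: exp_minus field_simps)
qed

lemma exp_one_div_exp_one_minus_one:
  "exp 1 / (exp 1 - 1) = 1 / (1 - exp (-1 :: real))"
  by (simp add: exp_minus field_simps)

lemma mult_acc: "x * acc x = 1 - exp (- x)"
  by (simp add: acc_def)

lemma acc_le_one:
  assumes "0 \<le> x"
  shows "acc x \<le> 1"
proof (cases "x = 0")
  case False
  have "1 - exp (- x) \<le> x"
    using exp_ge_add_one_self[of "- x"] by simp
  then show ?thesis
    using False assms by (simp add: acc_def divide_le_eq)
qed (simp add: acc_def)

lemma acc_gt_acc_one:
  assumes "0 \<le> p" "p < 1"
  shows "1 - exp (-1) < acc p"
proof (cases "p = 0")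
  case True
  then show ?thesis by (simp add: acc_def)
next
  case False
  with assms have "p * (1 - exp (-1)) < 1 - exp (- p)"
    using exp_neg_less_chord[of p] by (simp add: algebra_simps)
  then show ?thesis
    using False assms by (simp add: acc_def less_divide_eq mult.commute)
qed

lemma acc_mult_one_plus_ge_one:
  assumes "0 \<le> y"
  shows "1 \<le> acc y * (1 + y)"
proof (cases "y = 0")
  case True
  then show ?thesis by (simp add: acc_def)
next
  case False
  have "exp (- y) * (1 + y) \<le> exp (- y) * exp y"
    by simp
  then have "y \<le> (1 - exp (- y)) * (1 + y)"
    by (simp add: algebra_simps flip: exp_add)
  then show ?thesis
    using False assms by (simp add: acc_def)
qed

lemma symNE_high_doctors_apply_high:
  assumes r: "r > 0" and v: "1 \<le> v * (1 - exp (-1))" and ne: "symNE r v p q"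
  shows "p = 1"
proof (rule ccontr)
  assume "p \<noteq> 1"
  with ne have p: "0 \<le> p" "p < 1"
    by (auto simp: symNE_def)
  with ne have "v * acc p \<le> acc ((1 - p) / r)"
    by (auto simp: symNE_def acc_HH_def acc_HL_def)
  also have "\<dots> \<le> 1"
    using p r by (intro acc_le_one) simp
  also have "\<dots> \<le> v * (1 - exp (-1))"
    by (fact v)
  also have "\<dots> < v * acc p"
  proof (intro mult_strict_left_mono)
    have "0 < 1 - exp (-1 :: real)"
      by simp
    then show "0 < v"
      using v zero_less_mult_pos2[of v "1 - exp (-1)"] by linarith
  qed (fact acc_gt_acc_one[OF p])
  finally show False by simp
qed

lemma symNE_low_welfare_ge:
  assumes r: "r > 0" and v: "v > 0" and ne: "symNE r v 1 q"
  shows "r \<le> (1 + v) * exp (-1) * (1 - exp (- (q * r))) + 2 * r * (1 - exp (- (1 - q)))"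
proof -
  define a where "a = acc (1 - q)"
  have q: "0 \<le> q" "q \<le> 1"
    using ne by (auto simp: symNE_def)
  have high: "q * r * a \<le> (1 + v) * exp (-1) * (1 - exp (- (q * r)))"
  proof (cases "q = 0")
    case False
    with q ne have "a \<le> v * (exp (-1) * acc (q * r))"
      by (simp add: symNE_def acc_LH_def acc_LL_def a_def)
    then have "q * r * a \<le> q * r * (v * (exp (-1) * acc (q * r)))"
      using q r by (intro mult_left_mono) simp_all
    also have "\<dots> = v * (exp (-1) * (q * r * acc (q * r)))"
      by (simp add: algebra_simps)
    also have "\<dots> = v * (exp (-1) * (1 - exp (- (q * r))))"
      by (simp add: mult_acc)
    also have "\<dots> \<le> (1 + v) * (exp (-1) * (1 - exp (- (q * r))))"
      using q r by (intro mult_right_mono) simp_all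
    finally show ?thesis by (simp add: mult.assoc)
  qed simp
  have low: "2 * r * (1 - exp (- (1 - q))) = 2 * r * (1 - q) * a"
    using mult_acc[of "1 - q"] by (simp add: a_def)
  have "r \<le> r * (a * (1 + (1 - q)))"
    using r q acc_mult_one_plus_ge_one[of "1 - q"] by (simp add: a_def)
  also have "\<dots> = q * r * a + 2 * r * (1 - q) * a"
    by (simp add: algebra_simps)
  finally show ?thesis
    using high low by linarith
qed

theorem proposition2:
  fixes r v p q :: real
  assumes "r > 0"
    and "v \<ge> exp 1 / (exp 1 - 1)"
    and "symNE r v p q"
  shows "welfare r v p q \<ge> exp 1 / (2 * (exp 1 - 1)) * welfare_simple r v"
proof -
  have e: "1/2 \<le> 1 - exp (-1 :: real)"
    using exp_neg_one_le_half by simp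
  have v: "1 \<le> v * (1 - exp (-1))"
    using assms(2) e by (simp add: exp_one_div_exp_one_minus_one divide_le_eq)
  have "v > 0"
    using v e zero_less_mult_pos2[of v "1 - exp (-1)"] by linarith
  have p: "p = 1"
    using symNE_high_doctors_apply_high assms(1,3) v by blast
  have "v * (1/2) \<le> v * (1 - exp (-1))"
    using e \<open>v > 0\<close> by (intro mult_left_mono) simp_all
  then have "v \<le> 2 * v * (1 - exp (-1))"
    by simp
  moreover have "r \<le> (1 + v) * exp (-1) * (1 - exp (- (q * r))) + 2 * r * (1 - exp (- (1 - q)))"
    using symNE_low_welfare_ge assms(1,3) \<open>v > 0\<close> p by blast
  ultimately have "v + r \<le> welfare r v p q"
    using p by (simp add: welfare_def)
  moreover have "exp 1 / (2 * (exp 1 - 1)) * welfare_simple r v = v + r"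
    using welfare_simple_formula[OF assms(1), of v] e by (simp add: exp_minus field_simps)
  ultimately show ?thesis by simp
qed

end
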